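(* Consider configurations consisting only of colored chips (no jokers, no dominoes). Call such a configuration $E$ sufficient if $E$ achieves $3$ dominoes, and minimal sufficient if $E$ is sufficient and no proper sub-configuration of $E$ (i.e. one obtained by removing at least one chip) achieves $3$ dominoes. Then, up to permutation of the three colors, there are exactly two minimal sufficient configurations: $M=(3,3,1)$ (three chips of one color, three of a second, one of the third) and $N=(3,2,2)$. Moreover, for a game with $p\ge1$ players with initial configuration $I$ (consisting of $2p$ colored chips), survival is possible if and only if $I$ contains (componentwise, after some permutation of colors) $M$ or $N$. Finally, a game with $p$ players is non-trivial if and only if $p\ge 4$.
   Context: Game model: there are colored chips of three colors, "jokers", and dominoes. A configuration is a tuple $(a,b,c,x,d)$ of nonnegative integers: $a,b,c$ colored chips of the three colors, $x$ jokers, $d$ dominoes. Two kinds of exchanges are allowed: Rule 1: remove three chips, consisting of some number $j\in\{0,1,2,3\}$ of jokers together with $3-j$ colored chips of pairwise distinct colors, and add one domino and one joker. Rule 2: if $d\ge 3$, remove three dominoes and add seven jokers. (Jokers model chips returned by the exchanges, whose color may be freely chosen.) A configuration $E$ yields $F$ if $F$ is obtained from $E$ by a finite (possibly empty) sequence of exchanges; $E$ achieves $F$ if $E$ yields some configuration that is componentwise $\ge F$. A game with $p$ players starts from an initial configuration $I$ consisting of $2p$ colored chips (any color distribution), no jokers and no dominoes; "survival" means $I$ achieves $p$ dominoes. A game with $p$ players is trivial if survival is impossible for every such initial configuration $I$, and non-trivial otherwise. *)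

theory Defs
  imports Main "HOL-Library.Multiset"
begin

text \<open>A configuration (a,b,c,x,d): a,b,c colored chips of the three colors,
  x jokers, d dominoes.\<close>
type_synonym config = "nat \<times> nat \<times> nat \<times> nat \<times> nat"

text \<open>Rule 1: remove j jokers and 3-j colored chips of pairwise
  distinct colors (u,v,w \<in> {0,1} indicate which colors are removed), add one
  domino and one joker.\<close>
inductive step :: "config \<Rightarrow> config \<Rightarrow> bool" where
  rule1: "\<lbrakk> u \<le> 1; v \<le> 1; w \<le> 1; u + v + w + j = 3;
           u \<le> a; v \<le> b; w \<le> c; j \<le> x \<rbrakk> \<Longrightarrow>
          step (a, b, c, x, d) (a - u, b - v, c - w, x - j + 1, d + 1)"
| rule2: "d \<ge> 3 \<Longrightarrow> step (a, b, c, x, d) (a, b, c, x + 7, d - 3)"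

definition yields :: "config \<Rightarrow> config \<Rightarrow> bool" where
  "yields E F \<longleftrightarrow> step\<^sup>*\<^sup>* E F"

definition cfg_le :: "config \<Rightarrow> config \<Rightarrow> bool" where
  "cfg_le F G \<longleftrightarrow> (case F of (a,b,c,x,d) \<Rightarrow> case G of (a',b',c',x',d') \<Rightarrow>
      a \<le> a' \<and> b \<le> b' \<and> c \<le> c' \<and> x \<le> x' \<and> d \<le> d')"

definition achieves :: "config \<Rightarrow> config \<Rightarrow> bool" where
  "achieves E F \<longleftrightarrow> (\<exists>G. yields E G \<and> cfg_le F G)"

definition colored :: "nat \<Rightarrow> nat \<Rightarrow> nat \<Rightarrow> config" where
  "colored a b c = (a, b, c, 0, 0)"

definition sufficient :: "nat \<Rightarrow> nat \<Rightarrow> nat \<Rightarrow> bool" where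
  "sufficient a b c \<longleftrightarrow> achieves (colored a b c) (0, 0, 0, 0, 3)"

definition minimal_sufficient :: "nat \<Rightarrow> nat \<Rightarrow> nat \<Rightarrow> bool" where
  "minimal_sufficient a b c \<longleftrightarrow> sufficient a b c \<and>
     (\<forall>a' b' c'. a' \<le> a \<and> b' \<le> b \<and> c' \<le> c \<and> (a', b', c') \<noteq> (a, b, c)
        \<longrightarrow> \<not> achieves (colored a' b' c') (0, 0, 0, 0, 3))"

definition perm_eq :: "nat \<times> nat \<times> nat \<Rightarrow> nat \<times> nat \<times> nat \<Rightarrow> bool" where
  "perm_eq t s \<longleftrightarrow> (case t of (a,b,c) \<Rightarrow> case s of (a',b',c') \<Rightarrow>
      mset [a, b, c] = mset [a', b', c'])"

definition contains_perm :: "nat \<times> nat \<times> nat \<Rightarrow> nat \<times> nat \<times> nat \<Rightarrow> bool" where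
  "contains_perm t T \<longleftrightarrow> (\<exists>a' b' c'. perm_eq (a', b', c') T \<and>
      (case t of (a,b,c) \<Rightarrow> a' \<le> a \<and> b' \<le> b \<and> c' \<le> c))"

definition survives :: "nat \<Rightarrow> nat \<Rightarrow> nat \<Rightarrow> nat \<Rightarrow> bool" where
  "survives p a b c \<longleftrightarrow> achieves (colored a b c) (0, 0, 0, 0, p)"

definition nontrivial :: "nat \<Rightarrow> bool" where
  "nontrivial p \<longleftrightarrow> (\<exists>a b c. a + b + c = 2 * p \<and> survives p a b c)"

end

theory Submission imports Defs begin

text \<open>Rule 2 needs three dominoes, so the first three exchanges from a colored configuration
  are Rule 1 exchanges. These conserve chips + jokers + 2 * dominoes and always leave a joker,
  so three of them consume at least seven colored chips, at most three of each color; thus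
  \<open>min a 3 + min b 3 + min c 3 \<ge> 7\<close>, which says exactly that (a, b, c) contains M or N.
  By the same count, p \<le> 2 dominoes cost at least 2p + 1 chips. Conversely M and N reach three
  dominoes explicitly, and from then on Rule 2 followed by three joker-only exchanges gains a
  joker, so every number of dominoes can be achieved.\<close>

lemma step_rule1I:
  assumes "u \<le> 1" "v \<le> 1" "w \<le> 1" "u + v + w + j = 3" "u \<le> a" "v \<le> b" "w \<le> c" "j \<le> x"
    and "t = (a - u, b - v, c - w, x + 1 - j, d + 1)"
  shows "step (a, b, c, x, d) t"
  using step.rule1[OF assms(1-8)] assms(8,9) by (simp add: Suc_diff_le)

lemma step_jokers_to_domino: "step (a, b, c, x + 3, d) (a, b, c, x + 1, d + 1)"
  by (rule step_rule1I[of 0 0 0 3]) simp_all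

lemma achieves_dominoes_iff:
  "achieves (colored a b c) (0, 0, 0, 0, p) \<longleftrightarrow>
     (\<exists>a' b' c' x d. step\<^sup>*\<^sup>* (a, b, c, 0, 0) (a', b', c', x, d) \<and> p \<le> d)"
  unfolding achieves_def yields_def cfg_le_def colored_def by auto

text \<open>The states reachable from \<open>(a, b, c, 0, 0)\<close> before the third domino: d Rule 1
  exchanges have removed ra, rb, rc \<le> d chips of the three colors, and the jokers are what
  remains of the removed chips after paying two per domino.\<close>
definition early_state :: "nat \<Rightarrow> nat \<Rightarrow> nat \<Rightarrow> config \<Rightarrow> bool" where
  "early_state a b c t \<longleftrightarrow> (\<exists>ra rb rc x d. t = (a - ra, b - rb, c - rc, x, d) \<and>
     ra \<le> min a d \<and> rb \<le> min b d \<and> rc \<le> min c d \<and> d \<le> 2 \<and>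
     x + 2 * d = ra + rb + rc \<and> (0 < d \<longrightarrow> 0 < x))"

lemma early_state_step:
  assumes "early_state a b c s" "step s t"
  shows "early_state a b c t \<or> 7 \<le> min a 3 + min b 3 + min c 3"
proof -
  obtain ra rb rc x d where s: "s = (a - ra, b - rb, c - rc, x, d)"
    and removed: "ra \<le> min a d" "rb \<le> min b d" "rc \<le> min c d"
    and "d \<le> 2" and jokers: "x + 2 * d = ra + rb + rc"
    using assms(1) unfolding early_state_def by blast
  from assms(2)[unfolded s] show ?thesis
  proof cases
    case (rule1 u v w j)
    have t: "t = (a - (ra + u), b - (rb + v), c - (rc + w), x + 1 - j, d + 1)"
      using rule1 by simp
    have fits: "ra + u \<le> min a (d + 1)" "rb + v \<le> min b (d + 1)" "rc + w \<le> min c (d + 1)"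
      using rule1 removed by auto
    have count: "(x + 1 - j) + 2 * (d + 1) = (ra + u) + (rb + v) + (rc + w)"
      using rule1 jokers by simp
    show ?thesis
    proof (cases "d < 2")
      case True
      then have "d + 1 \<le> 2" "0 < x + 1 - j" using rule1 by simp_all
      with t fits count have "early_state a b c t"
        unfolding early_state_def by blast
      then show ?thesis ..
    next
      case False
      with \<open>d \<le> 2\<close> have "d + 1 = 3" by simp
      with fits have "(ra + u) + (rb + v) + (rc + w) \<le> min a 3 + min b 3 + min c 3"
        by (metis add_mono)
      moreover have "(ra + u) + (rb + v) + (rc + w) = (x + 1 - j) + 6"
        using count \<open>d + 1 = 3\<close> by simp
      moreover have "1 \<le> x + 1 - j" using rule1 by simp
      ultimately have "7 \<le> min a 3 + min b 3 + min c 3" by linarith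
      then show ?thesis ..
    qed
  next
    case rule2
    with \<open>d \<le> 2\<close> show ?thesis by simp
  qed
qed

lemma reachable_early_state_or_capped_sum:
  assumes "step\<^sup>*\<^sup>* (a, b, c, 0, 0) t"
  shows "early_state a b c t \<or> 7 \<le> min a 3 + min b 3 + min c 3"
  using assms
proof (induction rule: rtranclp_induct)
  case base
  show ?case unfolding early_state_def by force
next
  case (step s t)
  then show ?case using early_state_step by blast
qed

lemma achieves_dominoes_necessary:
  assumes "achieves (colored a b c) (0, 0, 0, 0, p)" "1 \<le> p"
  shows "7 \<le> min a 3 + min b 3 + min c 3 \<or> (p \<le> 2 \<and> 2 * p < a + b + c)"
proof -
  obtain a' b' c' x d where reach: "step\<^sup>*\<^sup>* (a, b, c, 0, 0) (a', b', c', x, d)" and "p \<le> d"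
    using assms(1) unfolding achieves_dominoes_iff by blast
  from reachable_early_state_or_capped_sum[OF reach] show ?thesis
  proof
    assume "early_state a b c (a', b', c', x, d)"
    then obtain ra rb rc where "ra \<le> a" "rb \<le> b" "rc \<le> c" "d \<le> 2"
      and "x + 2 * d = ra + rb + rc" "0 < d \<longrightarrow> 0 < x"
      unfolding early_state_def by auto
    with \<open>p \<le> d\<close> assms(2) show ?thesis by linarith
  qed simp
qed

lemma capped_sum_ge_7_iff:
  fixes a b c :: nat
  shows "7 \<le> min a 3 + min b 3 + min c 3 \<longleftrightarrow>
     3 \<le> a \<and> 3 \<le> b \<and> 1 \<le> c \<or> 3 \<le> a \<and> 1 \<le> b \<and> 3 \<le> c \<or> 1 \<le> a \<and> 3 \<le> b \<and> 3 \<le> c \<or>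
     3 \<le> a \<and> 2 \<le> b \<and> 2 \<le> c \<or> 2 \<le> a \<and> 3 \<le> b \<and> 2 \<le> c \<or> 2 \<le> a \<and> 2 \<le> b \<and> 3 \<le> c"
  unfolding min_def by (simp split: if_splits; arith)

text \<open>One exchange of all three colors, then two exchanges of two colors and one joker each.
  Both M = (1,1,1) + 2{A,B} and N = (1,1,1) + {A,B} + {A,C} are chip budgets of this shape.\<close>
lemma reach_three_dominoes_by_pairs:
  assumes "u \<le> 1" "v \<le> 1" "w \<le> 1" "u + v + w = 2" "u' \<le> 1" "v' \<le> 1" "w' \<le> 1" "u' + v' + w' = 2"
    and "1 + u + u' \<le> a" "1 + v + v' \<le> b" "1 + w + w' \<le> c"
  shows "\<exists>a' b' c'. step\<^sup>*\<^sup>* (a, b, c, 0, 0) (a', b', c', 1, 3)"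
proof -
  have "step (a, b, c, 0, 0) (a - 1, b - 1, c - 1, 1, 1)"
    by (rule step_rule1I[of 1 1 1 0]) (use assms in auto)
  moreover have "step (a - 1, b - 1, c - 1, 1, 1) (a - 1 - u, b - 1 - v, c - 1 - w, 1, 2)"
    by (rule step_rule1I[of u v w 1]) (use assms in auto)
  moreover have "step (a - 1 - u, b - 1 - v, c - 1 - w, 1, 2)
      (a - 1 - u - u', b - 1 - v - v', c - 1 - w - w', 1, 3)"
    by (rule step_rule1I[of u' v' w' 1]) (use assms in auto)
  ultimately show ?thesis by (meson rtranclp.rtrancl_into_rtrancl rtranclp.rtrancl_refl)
qed

lemma reach_three_dominoes:
  assumes "7 \<le> min a 3 + min b 3 + min c 3"
  shows "\<exists>a' b' c'. step\<^sup>*\<^sup>* (a, b, c, 0, 0) (a', b', c', 1, 3)"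
  using assms unfolding capped_sum_ge_7_iff
proof (elim disjE conjE)
  assume "3 \<le> a" "3 \<le> b" "1 \<le> c"
  then show ?thesis by (intro reach_three_dominoes_by_pairs[of 1 1 0 1 1 0]) auto
next
  assume "3 \<le> a" "1 \<le> b" "3 \<le> c"
  then show ?thesis by (intro reach_three_dominoes_by_pairs[of 1 0 1 1 0 1]) auto
next
  assume "1 \<le> a" "3 \<le> b" "3 \<le> c"
  then show ?thesis by (intro reach_three_dominoes_by_pairs[of 0 1 1 0 1 1]) auto
next
  assume "3 \<le> a" "2 \<le> b" "2 \<le> c"
  then show ?thesis by (intro reach_three_dominoes_by_pairs[of 1 1 0 1 0 1]) auto
next
  assume "2 \<le> a" "3 \<le> b" "2 \<le> c"
  then show ?thesis by (intro reach_three_dominoes_by_pairs[of 1 1 0 0 1 1]) auto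
next
  assume "2 \<le> a" "2 \<le> b" "3 \<le> c"
  then show ?thesis by (intro reach_three_dominoes_by_pairs[of 1 0 1 0 1 1]) auto
qed

lemma joker_cycle: "step\<^sup>*\<^sup>* (a, b, c, x, d + 3) (a, b, c, x + 1, d + 3)"
proof -
  have "step (a, b, c, x, d + 3) (a, b, c, x + 7, d)"
    using step.rule2[of "d + 3" a b c x] by simp
  moreover have "step (a, b, c, x + 7, d) (a, b, c, x + 5, d + 1)"
    using step_jokers_to_domino[of a b c "x + 4" d] by (simp add: eval_nat_numeral ac_simps)
  moreover have "step (a, b, c, x + 5, d + 1) (a, b, c, x + 3, d + 2)"
    using step_jokers_to_domino[of a b c "x + 2" "d + 1"] by (simp add: eval_nat_numeral ac_simps)
  moreover have "step (a, b, c, x + 3, d + 2) (a, b, c, x + 1, d + 3)"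
    using step_jokers_to_domino[of a b c x "d + 2"] by (simp add: eval_nat_numeral ac_simps)
  ultimately show ?thesis by (meson rtranclp.rtrancl_into_rtrancl rtranclp.rtrancl_refl)
qed

lemma jokers_accumulate:
  assumes "3 \<le> d"
  shows "step\<^sup>*\<^sup>* (a, b, c, x, d) (a, b, c, x + k, d)"
proof (induction k)
  case 0
  then show ?case by simp
next
  case (Suc k)
  obtain e where "d = e + 3" using assms le_Suc_ex by (metis add.commute)
  then have "step\<^sup>*\<^sup>* (a, b, c, x + k, d) (a, b, c, x + Suc k, d)"
    using joker_cycle[of a b c "x + k" e] by simp
  with Suc.IH show ?case by simp
qed

lemma jokers_to_dominoes: "step\<^sup>*\<^sup>* (a, b, c, x + 2 * n + 1, d) (a, b, c, x + 1, d + n)"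
proof (induction n arbitrary: x)
  case 0
  then show ?case by simp
next
  case (Suc n)
  have "step\<^sup>*\<^sup>* (a, b, c, x + 2 * Suc n + 1, d) (a, b, c, x + 3, d + n)"
    using Suc.IH[of "x + 2"] by (simp add: eval_nat_numeral ac_simps)
  moreover have "step (a, b, c, x + 3, d + n) (a, b, c, x + 1, d + Suc n)"
    using step_jokers_to_domino[of a b c x "d + n"] by simp
  ultimately show ?case by simp
qed

lemma achieves_all_dominoes:
  assumes "step\<^sup>*\<^sup>* (a, b, c, 0, 0) (a', b', c', x, d)" "3 \<le> d"
  shows "achieves (colored a b c) (0, 0, 0, 0, p)"
proof -
  have "step\<^sup>*\<^sup>* (a', b', c', x, d) (a', b', c', x + 2 * p + 1, d)"
    unfolding add.assoc by (rule jokers_accumulate[OF assms(2)])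
  also have "step\<^sup>*\<^sup>* \<dots> (a', b', c', x + 1, d + p)"
    by (rule jokers_to_dominoes)
  finally show ?thesis
    using assms(1) unfolding achieves_dominoes_iff by (meson le_add2 rtranclp_trans)
qed

lemma sufficient_iff: "sufficient a b c \<longleftrightarrow> 7 \<le> min a 3 + min b 3 + min c 3"
proof
  assume "sufficient a b c"
  then show "7 \<le> min a 3 + min b 3 + min c 3"
    using achieves_dominoes_necessary[of a b c 3] unfolding sufficient_def by simp
next
  assume "7 \<le> min a 3 + min b 3 + min c 3"
  then show "sufficient a b c"
    using reach_three_dominoes achieves_all_dominoes unfolding sufficient_def by blast
qed

lemma survives_iff:
  assumes "1 \<le> p" "a + b + c = 2 * p"
  shows "survives p a b c \<longleftrightarrow> 7 \<le> min a 3 + min b 3 + min c 3"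
proof
  assume "survives p a b c"
  then show "7 \<le> min a 3 + min b 3 + min c 3"
    using achieves_dominoes_necessary[of a b c p] assms unfolding survives_def by auto
next
  assume "7 \<le> min a 3 + min b 3 + min c 3"
  then show "survives p a b c"
    using reach_three_dominoes achieves_all_dominoes unfolding survives_def by blast
qed

lemma perm_eq_iff:
  "perm_eq (a, b, c) (x, y, z) \<longleftrightarrow>
     (a, b, c) \<in> {(x, y, z), (x, z, y), (y, x, z), (y, z, x), (z, x, y), (z, y, x)}"
  unfolding perm_eq_def prod.case by (auto simp: add_eq_conv_ex)

lemma perm_eq_M_or_N_iff:
  "perm_eq (a, b, c) (3, 3, 1) \<or> perm_eq (a, b, c) (3, 2, 2) \<longleftrightarrow>
     a \<le> 3 \<and> b \<le> 3 \<and> c \<le> 3 \<and> a + b + c = 7"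
proof
  assume "perm_eq (a, b, c) (3, 3, 1) \<or> perm_eq (a, b, c) (3, 2, 2)"
  then show "a \<le> 3 \<and> b \<le> 3 \<and> c \<le> 3 \<and> a + b + c = 7" by (auto simp: perm_eq_iff)
next
  assume bounds: "a \<le> 3 \<and> b \<le> 3 \<and> c \<le> 3 \<and> a + b + c = 7"
  then have "a = 1 \<or> a = 2 \<or> a = 3" "b = 1 \<or> b = 2 \<or> b = 3" by arith+
  with bounds show "perm_eq (a, b, c) (3, 3, 1) \<or> perm_eq (a, b, c) (3, 2, 2)"
    unfolding perm_eq_iff by (elim disjE conjE) simp_all
qed

lemma contains_M_or_N_iff:
  "contains_perm (a, b, c) (3, 3, 1) \<or> contains_perm (a, b, c) (3, 2, 2) \<longleftrightarrow>
     7 \<le> min a 3 + min b 3 + min c 3"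
  unfolding contains_perm_def perm_eq_iff capped_sum_ge_7_iff
  by (simp add: conj_disj_distribR ex_disj_distrib) meson

lemma minimal_sufficient_iff:
  "minimal_sufficient a b c \<longleftrightarrow> a \<le> 3 \<and> b \<le> 3 \<and> c \<le> 3 \<and> a + b + c = 7"
proof
  assume minimal: "minimal_sufficient a b c"
  then have suff: "7 \<le> min a 3 + min b 3 + min c 3"
    unfolding minimal_sufficient_def sufficient_iff by blast
  have smaller: "\<And>a' b' c'. a' \<le> a \<Longrightarrow> b' \<le> b \<Longrightarrow> c' \<le> c \<Longrightarrow> (a', b', c') \<noteq> (a, b, c) \<Longrightarrow>
      min a' 3 + min b' 3 + min c' 3 < 7"
    using minimal unfolding minimal_sufficient_def sufficient_def[symmetric] sufficient_iff not_le
    by blast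
  have "(min a 3, min b 3, min c 3) = (a, b, c)"
    using smaller[of "min a 3" "min b 3" "min c 3"] suff by fastforce
  then have capped: "a \<le> 3" "b \<le> 3" "c \<le> 3"
    by (metis min.cobounded2 prod.inject)+
  with suff have "(a - 1, b, c) \<noteq> (a, b, c)" by simp
  with smaller[of "a - 1" b c] have "a + b + c < 8"
    using capped by simp
  with suff capped show "a \<le> 3 \<and> b \<le> 3 \<and> c \<le> 3 \<and> a + b + c = 7"
    by simp
next
  assume bounds: "a \<le> 3 \<and> b \<le> 3 \<and> c \<le> 3 \<and> a + b + c = 7"
  then have "7 \<le> min a 3 + min b 3 + min c 3" by (simp add: min_absorb1)
  moreover have "min a' 3 + min b' 3 + min c' 3 < 7"
    if "a' \<le> a" "b' \<le> b" "c' \<le> c" "(a', b', c') \<noteq> (a, b, c)" for a' b' c'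
  proof -
    have "a' + b' + c' < a + b + c" using that by auto
    moreover have "min a' 3 \<le> a'" "min b' 3 \<le> b'" "min c' 3 \<le> c'" by simp_all
    ultimately show ?thesis using bounds by linarith
  qed
  ultimately show "minimal_sufficient a b c"
    unfolding minimal_sufficient_def sufficient_def[symmetric] sufficient_iff not_le by blast
qed

lemma nontrivial_iff:
  assumes "1 \<le> p"
  shows "nontrivial p \<longleftrightarrow> 4 \<le> p"
proof
  assume "nontrivial p"
  then obtain a b c where "a + b + c = 2 * p" "7 \<le> min a 3 + min b 3 + min c 3"
    using survives_iff[OF assms] unfolding nontrivial_def by blast
  moreover have "min a 3 \<le> a" "min b 3 \<le> b" "min c 3 \<le> c" by simp_all
  ultimately show "4 \<le> p" by linarith
next
  assume "4 \<le> p"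
  then have "3 + 3 + (2 * p - 6) = 2 * p" "7 \<le> min 3 3 + min 3 3 + min (2 * p - 6) 3"
    by simp_all
  then show "nontrivial p"
    using survives_iff[OF assms] unfolding nontrivial_def by blast
qed

theorem theorem4p2:
  shows "{(a, b, c). minimal_sufficient a b c} =
           {t. perm_eq t (3, 3, 1)} \<union> {t. perm_eq t (3, 2, 2)}
     \<and> (\<forall>p a b c. p \<ge> 1 \<longrightarrow> a + b + c = 2 * p \<longrightarrow>
           (survives p a b c \<longleftrightarrow>
            (contains_perm (a, b, c) (3, 3, 1) \<or> contains_perm (a, b, c) (3, 2, 2))))
     \<and> (\<forall>p. p \<ge> 1 \<longrightarrow> (nontrivial p \<longleftrightarrow> p \<ge> 4))"
proof (intro conjI allI impI)
  show "{(a, b, c). minimal_sufficient a b c} = {t. perm_eq t (3, 3, 1)} \<union> {t. perm_eq t (3, 2, 2)}"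
    using minimal_sufficient_iff[unfolded perm_eq_M_or_N_iff[symmetric]] by auto
next
  fix p a b c :: nat
  assume "1 \<le> p" "a + b + c = 2 * p"
  then show "survives p a b c \<longleftrightarrow> contains_perm (a, b, c) (3, 3, 1) \<or> contains_perm (a, b, c) (3, 2, 2)"
    unfolding contains_M_or_N_iff by (rule survives_iff)
next
  fix p :: nat
  assume "1 \<le> p"
  then show "nontrivial p \<longleftrightarrow> 4 \<le> p" by (rule nontrivial_iff)
qed

end
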